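(* Let $K$ be a positive definite $n\times n$ matrix and $H$ any $n\times n$ complex matrix. For real exponents $p,s$ define, on positive definite $n\times n$ matrices $A$, \[ \psi_p^s(A)=\bigl(K+H^*A^pH\bigr)^s . \] If $-1\le p\le0$ and $-1\le s\le0$, then $\psi_p^s$ is concave, i.e. $\psi_p^s(\lambda A+(1-\lambda)B)\ge\lambda\psi_p^s(A)+(1-\lambda)\psi_p^s(B)$ in the Loewner order for all positive definite $A,B$ and $\lambda\in[0,1]$.
   Context: Powers of positive definite matrices are defined by functional calculus; the Loewner order is $X\ge Y$ iff $X-Y$ is positive semidefinite. *)

theory Defs
  imports "HOL-Analysis.Analysis"
begin

definition adj :: "complex^'n^'m \<Rightarrow> complex^'m^'n" where
  "adj A = (\<chi> i j. cnj (A $ j $ i))"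

definition hermitian :: "complex^'n^'n \<Rightarrow> bool" where
  "hermitian A \<longleftrightarrow> adj A = A"

definition qform :: "complex^'n^'n \<Rightarrow> complex^'n \<Rightarrow> complex" where
  "qform A x = (\<Sum>i\<in>UNIV. cnj (x $ i) * (A *v x) $ i)"

definition psd :: "complex^'n^'n \<Rightarrow> bool" where
  "psd A \<longleftrightarrow> hermitian A \<and> (\<forall>x. 0 \<le> Re (qform A x))"

definition posdef :: "complex^'n^'n \<Rightarrow> bool" where
  "posdef A \<longleftrightarrow> hermitian A \<and> (\<forall>x. x \<noteq> 0 \<longrightarrow> 0 < Re (qform A x))"

definition loewner_le :: "complex^'n^'n \<Rightarrow> complex^'n^'n \<Rightarrow> bool" where
  "loewner_le Y X \<longleftrightarrow> psd (X - Y)"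

definition unitary :: "complex^'n^'n \<Rightarrow> bool" where
  "unitary U \<longleftrightarrow> adj U ** U = mat 1"

definition diagm :: "('n \<Rightarrow> complex) \<Rightarrow> complex^'n^'n" where
  "diagm d = (\<chi> i j. if i = j then d i else 0)"

definition mpow :: "complex^'n^'n \<Rightarrow> real \<Rightarrow> complex^'n^'n" where
  "mpow A p = (SOME M. \<exists>U d. unitary U \<and> (\<forall>i. 0 < d i) \<and>
       A = U ** diagm (\<lambda>i. complex_of_real (d i)) ** adj U \<and>
       M = U ** diagm (\<lambda>i. complex_of_real (d i powr p)) ** adj U)"

definition psi :: "complex^'n^'n \<Rightarrow> complex^'n^'n \<Rightarrow> real \<Rightarrow> real \<Rightarrow> complex^'n^'n \<Rightarrow> complex^'n^'n" where
  "psi K H p s A = mpow (K + adj H ** mpow A p ** H) s"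

end

theory Submission
  imports Defs
begin

text \<open>
  Since A^p = (A^-p)^-1 and M^s = (M^-1)^-s, the map psi factors as
  A \<mapsto> A^-p \<mapsto> (K + H* (A^-p)^-1 H)^-1 \<mapsto> (K + H* A^p H)^s, and each of the three maps
  is monotone and concave on positive definite matrices; maps with both properties compose.
  For X \<mapsto> X^r with 0 \<le> r \<le> 1 this follows from the integral representation
  X^r = c^-1 \<integral> l^(r - 1) X (l + X)^-1 dl over l > 0, whose integrand is an instance of the
  middle map. The middle map is handled by the variational formula
  v* X^-1 v = max_z (2 Re z* v - z* X z), which makes (X, v) \<mapsto> v* X^-1 v jointly convex;
  applied once more to K + H* X^-1 H it gives monotonicity and concavity of the inverse.
  The functional calculus rests on the spectral theorem, obtained by maximising the quadratic
  form on unit spheres of invariant subspaces.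
\<close>


section \<open>Complex inner product and adjoint\<close>

definition cinner :: "complex^'n \<Rightarrow> complex^'n \<Rightarrow> complex" where
  "cinner x y = (\<Sum>i\<in>UNIV. cnj (x $ i) * y $ i)"

abbreviation quad :: "complex^'n^'n \<Rightarrow> complex^'n \<Rightarrow> real" where
  "quad A x \<equiv> Re (qform A x)"

lemma qform_cinner: "qform A x = cinner x (A *v x)"
  by (simp add: qform_def cinner_def)

lemma complex_scaleR: "c *\<^sub>R (z :: complex) = complex_of_real c * z"
  by (simp add: scaleR_conv_of_real)

lemma adj_nth [simp]: "adj A $ i $ j = cnj (A $ j $ i)"
  by (simp add: adj_def)

lemma adj_adj [simp]: "adj (adj A) = A"
  by (simp add: vec_eq_iff)

lemma adj_mult: "adj (A ** B) = adj B ** adj A"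
  by (simp add: vec_eq_iff matrix_matrix_mult_def mult.commute)

lemma adj_add: "adj (A + B) = adj A + adj B"
  by (simp add: vec_eq_iff)

lemma adj_diff: "adj (A - B) = adj A - adj B"
  by (simp add: vec_eq_iff)

lemma adj_scaleR: "adj (c *\<^sub>R A) = c *\<^sub>R adj A"
  by (simp add: vec_eq_iff)

lemma adj_mat_1 [simp]: "adj (mat 1) = mat 1"
  by (simp add: vec_eq_iff mat_def)

lemma cinner_adj: "cinner x (A *v y) = cinner (adj A *v x) y"
proof -
  have "cinner x (A *v y) = (\<Sum>i\<in>UNIV. \<Sum>j\<in>UNIV. cnj (x $ i) * A $ i $ j * y $ j)"
    unfolding cinner_def matrix_vector_mult_def by (simp add: sum_distrib_left mult_ac)
  also have "\<dots> = (\<Sum>j\<in>UNIV. \<Sum>i\<in>UNIV. cnj (x $ i) * A $ i $ j * y $ j)"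
    by (rule sum.swap)
  also have "\<dots> = cinner (adj A *v x) y"
    unfolding cinner_def matrix_vector_mult_def
    by (simp add: sum_distrib_right sum_distrib_left mult_ac)
  finally show ?thesis .
qed

lemma cinner_cnj: "cnj (cinner x y) = cinner y x"
  by (simp add: cinner_def mult.commute)

lemma cinner_adj_left: "cinner (A *v x) y = cinner x (adj A *v y)"
  by (metis cinner_adj adj_adj)

lemma cinner_add_right: "cinner x (y + z) = cinner x y + cinner x z"
  by (simp add: cinner_def algebra_simps sum.distrib)

lemma cinner_add_left: "cinner (x + y) z = cinner x z + cinner y z"
  by (simp add: cinner_def algebra_simps sum.distrib)

lemma cinner_diff_right: "cinner x (y - z) = cinner x y - cinner x z"
  by (simp add: cinner_def algebra_simps sum_subtractf)

lemma cinner_diff_left: "cinner (x - y) z = cinner x z - cinner y z"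
  by (simp add: cinner_def algebra_simps sum_subtractf)

lemma cinner_smult_right: "cinner x (c *s y) = c * cinner x y"
  by (simp add: cinner_def sum_distrib_left mult_ac)

lemma cinner_smult_left: "cinner (c *s x) y = cnj c * cinner x y"
  by (simp add: cinner_def sum_distrib_left mult_ac)

lemma cinner_scaleR_right: "cinner x (c *\<^sub>R y) = complex_of_real c * cinner x y"
  by (simp add: cinner_def sum_distrib_left mult_ac complex_scaleR)

lemma cinner_scaleR_left: "cinner (c *\<^sub>R x) y = complex_of_real c * cinner x y"
  by (simp add: cinner_def sum_distrib_left mult_ac complex_scaleR)

lemma cinner_sum_right: "cinner x (\<Sum>k\<in>S. f k) = (\<Sum>k\<in>S. cinner x (f k))"
  by (simp add: cinner_def vec_eq_iff sum_component sum_distrib_left flip: sum.swap[of _ S])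

lemma cinner_self: "cinner x x = complex_of_real ((norm x)\<^sup>2)"
proof -
  have "(norm x)\<^sup>2 = (\<Sum>i\<in>UNIV. (cmod (x $ i))\<^sup>2)"
    by (simp add: norm_vec_def L2_set_def sum_nonneg)
  then show ?thesis
    by (simp add: cinner_def mult.commute[of "cnj _"] flip: complex_norm_square)
qed

lemma matrix_vector_mult_scaleR_complex: "A *v (c *\<^sub>R x) = c *\<^sub>R (A *v (x :: complex^'n))"
  by (simp add: vec_eq_iff matrix_vector_mult_def sum_distrib_left mult_ac complex_scaleR)

lemma scaleR_eq_smult: "c *\<^sub>R (x :: complex^'n) = complex_of_real c *s x"
  by (simp add: vec_eq_iff complex_scaleR)

lemma matrix_add_rdistrib: "(A + B) ** C = A ** C + B ** (C :: 'a::semiring_1^'n^'m)"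
  by (simp add: matrix_matrix_mult_def vec_eq_iff distrib_right sum.distrib)

lemma qform_add: "qform (A + B) x = qform A x + qform B x"
  by (simp add: qform_cinner matrix_vector_mult_add_rdistrib cinner_add_right)

lemma qform_diff: "qform (A - B) x = qform A x - qform B x"
  by (simp add: qform_cinner matrix_vector_mult_diff_rdistrib cinner_diff_right)

lemma qform_scaleR: "qform (c *\<^sub>R A) x = complex_of_real c * qform A x"
  by (simp add: qform_def matrix_vector_mult_def sum_distrib_left mult_ac complex_scaleR)

lemma qform_congruence: "qform (adj H ** M ** H) x = qform M (H *v x)"
  by (simp add: qform_cinner cinner_adj matrix_vector_mul_assoc[symmetric] matrix_mul_assoc[symmetric])

lemma qform_hermitian_real:
  assumes "hermitian A"
  shows "qform A x = complex_of_real (quad A x)"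
proof -
  have "cnj (qform A x) = qform A x"
    using assms unfolding hermitian_def qform_cinner by (metis cinner_adj cinner_cnj)
  then show ?thesis
    by (simp add: complex_eq_iff)
qed

lemma quad_convex:
  assumes psd: "\<forall>z. 0 \<le> quad K z" and t: "0 \<le> t" "t \<le> 1"
  shows "quad K (t *\<^sub>R a + (1 - t) *\<^sub>R b) \<le> t * quad K a + (1 - t) * quad K b"
proof -
  define c where "c = Re (cinner a (K *v b)) + Re (cinner b (K *v a))"
  have "quad K (a - b) = quad K a - c + quad K b"
    by (simp add: qform_cinner c_def matrix_vector_mult_diff_distrib cinner_diff_left cinner_diff_right)
  then have "t * (1 - t) * c \<le> t * (1 - t) * (quad K a + quad K b)"
    using psd[rule_format, of "a - b"] t by (intro mult_left_mono) auto
  moreover have "quad K (t *\<^sub>R a + (1 - t) *\<^sub>R b) = t\<^sup>2 * quad K a + t * (1 - t) * c + (1 - t)\<^sup>2 * quad K b"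
    unfolding qform_cinner matrix_vector_right_distrib matrix_vector_mult_scaleR_complex cinner_add_left
      cinner_add_right cinner_scaleR_left cinner_scaleR_right
    by (simp add: c_def power2_eq_square algebra_simps)
  ultimately show ?thesis
    by (simp add: power2_eq_square algebra_simps)
qed


section \<open>Unitary diagonalisation and the functional calculus\<close>

lemma diagm_nth: "diagm d $ i $ j = (if i = j then d i else 0)"
  by (simp add: diagm_def)

lemma matrix_mult_diagm_nth: "(W ** diagm d) $ i $ j = W $ i $ j * d j"
  by (simp add: matrix_matrix_mult_def diagm_def if_distrib cong: if_cong)

lemma diagm_matrix_mult_nth: "(diagm d ** W) $ i $ j = d i * W $ i $ j"
  by (simp add: matrix_matrix_mult_def diagm_def if_distrib if_distribR cong: if_cong)

lemma diagm_mult_diagm: "diagm a ** diagm b = diagm (\<lambda>i. a i * b i)"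
  by (simp add: vec_eq_iff matrix_mult_diagm_nth diagm_nth)

lemma diagm_add: "diagm a + diagm b = diagm (\<lambda>i. a i + b i)"
  by (simp add: vec_eq_iff diagm_def)

lemma scaleR_diagm: "c *\<^sub>R diagm a = diagm (\<lambda>i. complex_of_real c * a i)"
  by (simp add: vec_eq_iff diagm_def complex_scaleR)

lemma diagm_matrix_vector_mult_nth: "(diagm d *v x) $ i = d i * x $ i"
  by (simp add: matrix_vector_mult_def diagm_def if_distrib if_distribR cong: if_cong)

lemma diagm_1: "diagm (\<lambda>i. 1) = mat 1"
  by (simp add: vec_eq_iff diagm_def mat_def)

lemma adj_diagm_real: "adj (diagm (\<lambda>i. complex_of_real (d i))) = diagm (\<lambda>i. complex_of_real (d i))"
  by (simp add: vec_eq_iff diagm_def)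

lemma unitary_right: "unitary U \<Longrightarrow> U ** adj U = mat 1"
  unfolding unitary_def using matrix_left_right_inverse by blast

lemma unitary_conj_mult:
  "unitary U \<Longrightarrow> (U ** M ** adj U) ** (U ** N ** adj U) = U ** (M ** N) ** adj U"
  by (simp add: matrix_mul_assoc unitary_def)
     (simp add: matrix_mul_assoc[symmetric])

lemma qform_unitary_diagm:
  assumes "unitary U"
  shows "qform (U ** diagm c ** adj U) x = (\<Sum>i\<in>UNIV. c i * complex_of_real ((cmod ((adj U *v x) $ i))\<^sup>2))"
proof -
  let ?y = "adj U *v x"
  have "qform (U ** diagm c ** adj U) x = cinner ?y (diagm c *v ?y)"
    by (simp add: qform_cinner cinner_adj matrix_vector_mul_assoc[symmetric])
  also have "\<dots> = (\<Sum>i\<in>UNIV. c i * complex_of_real ((cmod (?y $ i))\<^sup>2))"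
    unfolding cinner_def diagm_matrix_vector_mult_nth
    by (intro sum.cong refl) (simp add: mult_ac flip: complex_norm_square)
  finally show ?thesis .
qed

text \<open>Well-definedness of the functional calculus: a unitary change of basis that intertwines two
  diagonal matrices only mixes coordinates carrying equal eigenvalues, so it also intertwines
  any function of them.\<close>

lemma unitary_diagm_fun_eq:
  fixes d e :: "'n::finite \<Rightarrow> real" and f :: "real \<Rightarrow> real"
  assumes U: "unitary U" and V: "unitary V"
    and eq: "U ** diagm (\<lambda>i. complex_of_real (d i)) ** adj U
      = V ** diagm (\<lambda>i. complex_of_real (e i)) ** adj V"
  shows "U ** diagm (\<lambda>i. complex_of_real (f (d i))) ** adj U
    = V ** diagm (\<lambda>i. complex_of_real (f (e i))) ** adj V"
proof -
  define W where "W = adj V ** U"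
  have W_intertwines: "W ** diagm (\<lambda>i. complex_of_real (d i)) = diagm (\<lambda>i. complex_of_real (e i)) ** W"
    using arg_cong[OF eq, of "\<lambda>M. adj V ** M ** U"] U V
    by (simp add: W_def matrix_mul_assoc unitary_def)
       (simp add: matrix_mul_assoc[symmetric])
  have "W $ i $ j * complex_of_real (f (d j)) = complex_of_real (f (e i)) * W $ i $ j" for i j
  proof -
    have "W $ i $ j * complex_of_real (d j) = complex_of_real (e i) * W $ i $ j"
      using arg_cong[OF W_intertwines, of "\<lambda>M. M $ i $ j"]
      by (simp add: matrix_mult_diagm_nth diagm_matrix_mult_nth)
    then have "W $ i $ j = 0 \<or> d j = e i"
      by (auto simp: mult.commute)
    then show ?thesis
      by auto
  qed
  then have W_intertwines_f:
    "W ** diagm (\<lambda>i. complex_of_real (f (d i))) = diagm (\<lambda>i. complex_of_real (f (e i))) ** W"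
    by (simp add: vec_eq_iff matrix_mult_diagm_nth diagm_matrix_mult_nth)
  have "U ** diagm (\<lambda>i. complex_of_real (f (d i))) ** adj U
      = V ** (W ** diagm (\<lambda>i. complex_of_real (f (d i)))) ** adj U"
    using V by (simp add: W_def matrix_mul_assoc unitary_right)
  also have "\<dots> = V ** diagm (\<lambda>i. complex_of_real (f (e i))) ** adj V"
    using U by (simp only: W_intertwines_f)
      (simp add: W_def matrix_mul_assoc, simp add: matrix_mul_assoc[symmetric] unitary_right)
  finally show ?thesis .
qed

definition spectral_decomp :: "complex^'n::finite^'n \<Rightarrow> complex^'n^'n \<Rightarrow> ('n \<Rightarrow> real) \<Rightarrow> bool" where
  "spectral_decomp A U d \<longleftrightarrow>
     unitary U \<and> (\<forall>i. 0 < d i) \<and> A = U ** diagm (\<lambda>i. complex_of_real (d i)) ** adj U"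

lemma mpow_spectral_decomp:
  assumes "spectral_decomp A U d"
  shows "mpow A p = U ** diagm (\<lambda>i. complex_of_real (d i powr p)) ** adj U"
proof -
  have U: "unitary U" and d: "\<forall>i. 0 < d i"
    and A: "A = U ** diagm (\<lambda>i. complex_of_real (d i)) ** adj U"
    using assms by (auto simp: spectral_decomp_def)
  show ?thesis
    unfolding mpow_def
  proof (rule someI2)
    show "\<exists>U' d'. unitary U' \<and> (\<forall>i. 0 < d' i) \<and>
        A = U' ** diagm (\<lambda>i. complex_of_real (d' i)) ** adj U' \<and>
        U ** diagm (\<lambda>i. complex_of_real (d i powr p)) ** adj U
          = U' ** diagm (\<lambda>i. complex_of_real (d' i powr p)) ** adj U'"
      using U d A by blast
  next
    fix M
    assume "\<exists>V e. unitary V \<and> (\<forall>i. 0 < e i) \<and> A = V ** diagm (\<lambda>i. complex_of_real (e i)) ** adj V \<and>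
       M = V ** diagm (\<lambda>i. complex_of_real (e i powr p)) ** adj V"
    then obtain V e where V: "unitary V" and A': "A = V ** diagm (\<lambda>i. complex_of_real (e i)) ** adj V"
      and M: "M = V ** diagm (\<lambda>i. complex_of_real (e i powr p)) ** adj V"
      by blast
    show "M = U ** diagm (\<lambda>i. complex_of_real (d i powr p)) ** adj U"
      using unitary_diagm_fun_eq[OF U V, of d e "\<lambda>x. x powr p"] A A' M by simp
  qed
qed

lemma spectral_decomp_mpow:
  assumes "spectral_decomp A U d"
  shows "spectral_decomp (mpow A p) U (\<lambda>i. d i powr p)"
proof -
  have "unitary U" and "\<forall>i. 0 < d i powr p"
    using assms unfolding spectral_decomp_def by (metis less_irrefl powr_gt_zero)+
  then show ?thesis
    by (simp add: spectral_decomp_def mpow_spectral_decomp[OF assms])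
qed

lemma mpow_minus_1_right_inverse:
  assumes "spectral_decomp A U d"
  shows "A ** mpow A (-1) = mat 1"
proof -
  have U: "unitary U" and d: "\<forall>i. 0 < d i"
    and A: "A = U ** diagm (\<lambda>i. complex_of_real (d i)) ** adj U"
    using assms by (auto simp: spectral_decomp_def)
  have "(\<lambda>i. complex_of_real (d i) * complex_of_real (d i powr -1)) = (\<lambda>i. 1)"
  proof
    fix i
    show "complex_of_real (d i) * complex_of_real (d i powr -1) = 1"
      using d[rule_format, of i] by (simp add: powr_minus flip: of_real_mult)
  qed
  then show ?thesis
    by (simp only: mpow_spectral_decomp[OF assms])
      (simp add: A unitary_conj_mult[OF U] diagm_mult_diagm diagm_1 unitary_right[OF U])
qed

lemma quad_spectral_decomp:
  assumes "spectral_decomp A U d"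
  shows "quad A x = (\<Sum>i\<in>UNIV. d i * (cmod ((adj U *v x) $ i))\<^sup>2)"
  using assms by (simp add: spectral_decomp_def qform_unitary_diagm Re_sum)

lemma spectral_decomp_hermitian: "spectral_decomp A U d \<Longrightarrow> hermitian A"
  by (simp add: spectral_decomp_def hermitian_def adj_mult adj_diagm_real matrix_mul_assoc)

lemma spectral_decomp_posdef:
  assumes S: "spectral_decomp A U d"
  shows "posdef A"
proof -
  have U: "unitary U" and d: "\<forall>i. 0 < d i"
    using S by (auto simp: spectral_decomp_def)
  have "0 < quad A x" if "x \<noteq> 0" for x
  proof -
    have "adj U *v x \<noteq> 0"
      using that unitary_right[OF U]
      by (metis matrix_vector_mul_assoc matrix_vector_mul_lid matrix_vector_mult_0_right)
    then obtain j where j: "(adj U *v x) $ j \<noteq> 0"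
      by (auto simp: vec_eq_iff)
    have "0 < d j * (cmod ((adj U *v x) $ j))\<^sup>2"
      using d j by simp
    also have "\<dots> \<le> (\<Sum>i\<in>UNIV. d i * (cmod ((adj U *v x) $ i))\<^sup>2)"
      by (rule member_le_sum) (auto intro!: mult_nonneg_nonneg less_imp_le[OF d[rule_format]])
    finally show ?thesis
      using quad_spectral_decomp[OF S] by simp
  qed
  then show ?thesis
    using spectral_decomp_hermitian[OF S] by (simp add: posdef_def)
qed


section \<open>The spectral theorem\<close>

lemma quad_attains_max_on_unit_sphere:
  fixes W :: "(complex^'n) set"
  assumes W_closed: "closed W" and W_scaleR: "\<And>c x. x \<in> W \<Longrightarrow> c *\<^sub>R x \<in> W"
    and "x1 \<in> W" and "x1 \<noteq> 0"
  shows "\<exists>x0\<in>W. norm x0 = 1 \<and> (\<forall>z\<in>W. quad A z \<le> quad A x0 * (norm z)\<^sup>2)"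
proof -
  define S where "S = W \<inter> sphere 0 1"
  have "compact S"
    unfolding S_def by (rule closed_Int_compact[OF W_closed compact_sphere])
  moreover have "(1 / norm x1) *\<^sub>R x1 \<in> S"
    using assms by (simp add: S_def)
  moreover have "continuous_on S (\<lambda>x. quad A x)"
    unfolding qform_def matrix_vector_mult_def by (intro continuous_intros)
  ultimately obtain x0 where x0: "x0 \<in> S" and max: "\<forall>z\<in>S. quad A z \<le> quad A x0"
    using continuous_attains_sup[of S "\<lambda>x. quad A x"] by blast
  have "quad A z \<le> quad A x0 * (norm z)\<^sup>2" if "z \<in> W" for z
  proof (cases "z = 0")
    case True
    then show ?thesis by (simp add: qform_def)
  next
    case False
    have "(1 / norm z) *\<^sub>R z \<in> S"
      using that False W_scaleR by (simp add: S_def)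
    then have "quad A ((1 / norm z) *\<^sub>R z) \<le> quad A x0"
      using max by blast
    moreover have "qform A ((1 / norm z) *\<^sub>R z) = complex_of_real ((1 / norm z)\<^sup>2) * qform A z"
      by (simp add: qform_cinner matrix_vector_mult_scaleR_complex cinner_scaleR_left
          cinner_scaleR_right power2_eq_square)
    ultimately show ?thesis
      using False by (simp add: field_simps)
  qed
  then show ?thesis
    using x0 by (auto simp: S_def)
qed

lemma quad_perturb_along_residual:
  fixes A :: "complex^'n^'n"
  assumes herm: "hermitian A" and x0: "norm x0 = 1"
  defines "w \<equiv> A *v x0 - quad A x0 *\<^sub>R x0"
  shows "(norm (x0 + e *\<^sub>R w))\<^sup>2 = 1 + e\<^sup>2 * (norm w)\<^sup>2"
    and "quad A (x0 + e *\<^sub>R w) = quad A x0 + 2 * e * (norm w)\<^sup>2 + e\<^sup>2 * quad A w"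
proof -
  \<comment> \<open>kept folded: with q_x0 below, simp would loop on quad A x0 = Re (qform A x0)\<close>
  define \<mu> where "\<mu> = quad A x0"
  have w: "A *v x0 = w + \<mu> *\<^sub>R x0"
    by (simp add: w_def \<mu>_def)
  have x0_x0: "cinner x0 x0 = 1"
    using x0 by (simp add: cinner_self)
  have q_x0: "qform A x0 = complex_of_real \<mu>"
    unfolding \<mu>_def by (rule qform_hermitian_real[OF herm])
  have x0_w: "cinner x0 w = 0"
    using arg_cong[OF w, of "cinner x0"] q_x0 x0_x0
    by (simp add: cinner_add_right cinner_scaleR_right qform_cinner)
  then have w_x0: "cinner w x0 = 0"
    using cinner_cnj[of x0 w] by simp
  have w_w: "cinner w w = complex_of_real ((norm w)\<^sup>2)"
    by (rule cinner_self)
  have w_Ax0: "cinner w (A *v x0) = cinner w w"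
    by (simp add: w cinner_add_right cinner_scaleR_right w_x0)
  have x0_Aw: "cinner x0 (A *v w) = cinner w w"
    using herm w_Ax0 by (metis cinner_adj cinner_cnj hermitian_def)
  have "complex_of_real ((norm (x0 + e *\<^sub>R w))\<^sup>2) = complex_of_real (1 + e\<^sup>2 * (norm w)\<^sup>2)"
    unfolding cinner_self[symmetric] cinner_add_left cinner_add_right cinner_scaleR_left
      cinner_scaleR_right
    by (simp add: x0_x0 x0_w w_x0 w_w power2_eq_square)
  then show "(norm (x0 + e *\<^sub>R w))\<^sup>2 = 1 + e\<^sup>2 * (norm w)\<^sup>2"
    by (simp only: of_real_eq_iff)
  have "qform A (x0 + e *\<^sub>R w) = qform A x0 + complex_of_real e * cinner x0 (A *v w)
      + complex_of_real e * (cinner w (A *v x0) + complex_of_real e * qform A w)"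
    by (simp add: qform_cinner matrix_vector_right_distrib matrix_vector_mult_scaleR_complex
        cinner_add_left cinner_add_right cinner_scaleR_left cinner_scaleR_right algebra_simps)
  then have "quad A (x0 + e *\<^sub>R w) = \<mu> + 2 * e * (norm w)\<^sup>2 + e\<^sup>2 * quad A w"
    by (simp add: q_x0 x0_Aw w_Ax0 w_w power2_eq_square algebra_simps)
  then show "quad A (x0 + e *\<^sub>R w) = quad A x0 + 2 * e * (norm w)\<^sup>2 + e\<^sup>2 * quad A w"
    by (simp only: \<mu>_def)
qed

text \<open>The residual w = A x0 - (x0* A x0) x0 of a maximiser lies in the subspace, and moving x0
  along it by a small step e increases the Rayleigh quotient by about 2 e |w|^2 unless w = 0.\<close>

lemma hermitian_maximiser_is_eigenvector:
  fixes A :: "complex^'n^'n"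
  assumes herm: "hermitian A"
    and W_add: "\<And>x y. x \<in> W \<Longrightarrow> y \<in> W \<Longrightarrow> x + y \<in> W"
    and W_scaleR: "\<And>c x. x \<in> W \<Longrightarrow> c *\<^sub>R x \<in> W"
    and W_invariant: "\<And>x. x \<in> W \<Longrightarrow> A *v x \<in> W"
    and x0: "x0 \<in> W" "norm x0 = 1"
    and max: "\<forall>z\<in>W. quad A z \<le> quad A x0 * (norm z)\<^sup>2"
  shows "A *v x0 = complex_of_real (quad A x0) *s x0"
proof -
  define w where "w = A *v x0 - quad A x0 *\<^sub>R x0"
  have "w \<in> W"
    unfolding w_def using W_add[OF W_invariant[OF x0(1)] W_scaleR[OF x0(1), of "- quad A x0"]] by simp
  have "w = 0"
  proof (rule ccontr)
    assume "w \<noteq> 0"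
    define a where "a = (norm w)\<^sup>2"
    have a: "a > 0"
      using \<open>w \<noteq> 0\<close> by (simp add: a_def)
    define b where "b = quad A x0 * a - quad A w"
    define e where "e = a / (\<bar>b\<bar> + 1)"
    have e: "e > 0"
      using a by (simp add: e_def)
    have "x0 + e *\<^sub>R w \<in> W"
      using W_add[OF x0(1) W_scaleR[OF \<open>w \<in> W\<close>]] .
    then have "quad A (x0 + e *\<^sub>R w) \<le> quad A x0 * (norm (x0 + e *\<^sub>R w))\<^sup>2"
      using max by blast
    then have "quad A x0 + 2 * e * a + e\<^sup>2 * quad A w \<le> quad A x0 * (1 + e\<^sup>2 * a)"
      unfolding a_def w_def quad_perturb_along_residual[OF herm x0(2)] .
    then have "e * (2 * a) \<le> e * (e * b)"
      by (simp add: b_def power2_eq_square algebra_simps)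
    then have "2 * a \<le> e * b"
      using e by (simp add: mult_le_cancel_left_pos)
    also have "\<dots> \<le> e * \<bar>b\<bar>"
      using e by (simp add: mult_left_mono)
    also have "\<dots> < a"
      using a by (simp add: e_def field_simps)
    finally show False
      using a by simp
  qed
  then have "A *v x0 = quad A x0 *\<^sub>R x0"
    by (simp add: w_def)
  then show ?thesis
    by (simp add: scaleR_eq_smult)
qed

lemma exists_nonzero_orthogonal:
  fixes f :: "nat \<Rightarrow> complex^'n"
  assumes orth: "\<forall>i<k. \<forall>j<k. cinner (f i) (f j) = (if i = j then 1 else 0)"
    and k: "k < CARD('n)"
  shows "\<exists>x. x \<noteq> 0 \<and> (\<forall>i<k. cinner (f i) x = 0)"
proof -
  have "\<not> UNIV \<subseteq> vec.span (f ` {..<k})"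
  proof
    assume "UNIV \<subseteq> vec.span (f ` {..<k})"
    then have "vec.dim (UNIV :: (complex^'n) set) \<le> card (f ` {..<k})"
      by (intro vec.dim_le_card) auto
    also have "\<dots> \<le> k"
      using card_image_le[of "{..<k}" f] by simp
    finally show False
      using k by (simp add: card_cart_basis)
  qed
  then obtain y where y: "y \<notin> vec.span (f ` {..<k})"
    by blast
  define x where "x = y - (\<Sum>i<k. cinner (f i) y *s f i)"
  have "cinner (f j) x = 0" if "j < k" for j
  proof -
    have "(\<Sum>i<k. cinner (f i) y * cinner (f j) (f i)) = (\<Sum>i<k. if i = j then cinner (f i) y else 0)"
      using orth that by (intro sum.cong) auto
    then show ?thesis
      using that by (simp add: x_def cinner_diff_right cinner_sum_right cinner_smult_right)
  qed
  moreover have "x \<noteq> 0"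
  proof
    assume "x = 0"
    then have "y = (\<Sum>i<k. cinner (f i) y *s f i)"
      by (simp add: x_def)
    moreover have "(\<Sum>i<k. cinner (f i) y *s f i) \<in> vec.span (f ` {..<k})"
      by (intro vec.span_sum vec.span_scale vec.span_base) auto
    ultimately show False
      using y by simp
  qed
  ultimately show ?thesis
    by blast
qed

lemma hermitian_eigenvector_orthogonal:
  fixes A :: "complex^'n^'n" and f :: "nat \<Rightarrow> complex^'n"
  assumes herm: "hermitian A"
    and orth: "\<forall>i<k. \<forall>j<k. cinner (f i) (f j) = (if i = j then 1 else 0)"
    and eig: "\<forall>i<k. \<exists>c::real. A *v f i = complex_of_real c *s f i"
    and k: "k < CARD('n)"
  obtains x c where "norm x = 1" "\<forall>i<k. cinner (f i) x = 0" "A *v x = complex_of_real c *s x"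
proof -
  define W where "W = {x. \<forall>i<k. cinner (f i) x = 0}"
  have "closed W"
  proof -
    have "W = (\<Inter>i<k. {x. cinner (f i) x = 0})"
      by (auto simp: W_def)
    moreover have "closed {x. cinner (f i) x = 0}" for i
      unfolding cinner_def by (intro closed_Collect_eq continuous_intros)
    ultimately show ?thesis
      by auto
  qed
  have W_add: "x + y \<in> W" if "x \<in> W" "y \<in> W" for x y
    using that by (simp add: W_def cinner_add_right)
  have W_scaleR: "c *\<^sub>R x \<in> W" if "x \<in> W" for c x
    using that by (simp add: W_def cinner_scaleR_right)
  have W_invariant: "A *v x \<in> W" if "x \<in> W" for x
  proof -
    have "cinner (f i) (A *v x) = 0" if "i < k" for i
    proof -
      obtain c :: real where c: "A *v f i = complex_of_real c *s f i"
        using eig \<open>i < k\<close> by blast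
      have "cinner (f i) (A *v x) = cinner (A *v f i) x"
        using herm by (simp add: cinner_adj hermitian_def)
      then show ?thesis
        using \<open>x \<in> W\<close> \<open>i < k\<close> by (simp add: c cinner_smult_left W_def)
    qed
    then show ?thesis
      by (simp add: W_def)
  qed
  obtain x1 where "x1 \<in> W" "x1 \<noteq> 0"
    using exists_nonzero_orthogonal[OF orth k] by (auto simp: W_def)
  then obtain x where "x \<in> W" "norm x = 1" and max: "\<forall>z\<in>W. quad A z \<le> quad A x * (norm z)\<^sup>2"
    using quad_attains_max_on_unit_sphere[OF \<open>closed W\<close> W_scaleR] by blast
  moreover have "A *v x = complex_of_real (quad A x) *s x"
    using hermitian_maximiser_is_eigenvector[OF herm W_add W_scaleR W_invariant] calculation by blast
  ultimately show ?thesis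
    using that by (auto simp: W_def)
qed

lemma hermitian_orthonormal_eigenvectors:
  fixes A :: "complex^'n^'n"
  assumes herm: "hermitian A"
  shows "k \<le> CARD('n) \<Longrightarrow> \<exists>f. (\<forall>i<k. \<forall>j<k. cinner (f i) (f j) = (if i = j then 1 else 0)) \<and>
           (\<forall>i<k. \<exists>c::real. A *v f i = complex_of_real c *s f i)"
proof (induction k)
  case 0
  then show ?case by simp
next
  case (Suc k)
  then obtain f where orth: "\<forall>i<k. \<forall>j<k. cinner (f i) (f j) = (if i = j then 1 else 0)"
    and eig: "\<forall>i<k. \<exists>c::real. A *v f i = complex_of_real c *s f i"
    by auto
  obtain x c where "norm x = 1" and x_orth: "\<forall>i<k. cinner (f i) x = 0"
    and x_eig: "A *v x = complex_of_real c *s x"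
    using hermitian_eigenvector_orthogonal[OF herm orth eig] Suc.prems by auto
  have x_norm: "cinner x x = 1"
    using \<open>norm x = 1\<close> by (simp add: cinner_self)
  have x_orth': "cinner x (f i) = 0" if "i < k" for i
    using x_orth that cinner_cnj[of "f i" x] by auto
  define g where "g = f(k := x)"
  have "\<forall>i<Suc k. \<forall>j<Suc k. cinner (g i) (g j) = (if i = j then 1 else 0)"
    using orth x_orth x_orth' x_norm by (auto simp: g_def less_Suc_eq)
  moreover have "\<forall>i<Suc k. \<exists>c::real. A *v g i = complex_of_real c *s g i"
    using eig x_eig by (auto simp: g_def less_Suc_eq)
  ultimately show ?case
    by blast
qed

theorem hermitian_unitary_diagonalisation:
  fixes A :: "complex^'n^'n"
  assumes "hermitian A"
  obtains U and d :: "'n \<Rightarrow> real"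
  where "unitary U" "A = U ** diagm (\<lambda>i. complex_of_real (d i)) ** adj U"
proof -
  obtain f where orth: "\<forall>i<CARD('n). \<forall>j<CARD('n). cinner (f i) (f j) = (if i = j then 1 else 0)"
    and eig: "\<forall>i<CARD('n). \<exists>c::real. A *v f i = complex_of_real c *s f i"
    using hermitian_orthonormal_eigenvectors[OF assms, of "CARD('n)"] by auto
  obtain ev where ev: "\<forall>i<CARD('n). A *v f i = complex_of_real (ev i) *s f i"
    using eig by metis
  obtain h :: "'n \<Rightarrow> nat" where h: "bij_betw h UNIV {..<CARD('n)}"
    using ex_bij_betw_finite_nat[of "UNIV :: 'n set"] by (auto simp: atLeast0LessThan)
  have h_lt: "h a < CARD('n)" for a
    using h by (auto simp: bij_betw_def)
  have h_eq_iff: "h a = h b \<longleftrightarrow> a = b" for a b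
    using h by (auto simp: bij_betw_def inj_on_def)
  define U :: "complex^'n^'n" where "U = (\<chi> r c. f (h c) $ r)"
  define d where "d c = ev (h c)" for c
  have "(adj U ** U) $ a $ b = mat 1 $ a $ b" for a b
  proof -
    have "(adj U ** U) $ a $ b = cinner (f (h a)) (f (h b))"
      by (simp add: matrix_matrix_mult_def U_def cinner_def)
    then show ?thesis
      using orth h_lt h_eq_iff by (simp add: mat_def)
  qed
  then have U: "unitary U"
    by (simp add: unitary_def vec_eq_iff)
  have "(A ** U) $ r $ c = (U ** diagm (\<lambda>i. complex_of_real (d i))) $ r $ c" for r c
  proof -
    have "(A ** U) $ r $ c = (A *v f (h c)) $ r"
      by (simp add: matrix_matrix_mult_def matrix_vector_mult_def U_def)
    then show ?thesis
      using ev h_lt by (simp add: matrix_mult_diagm_nth U_def d_def mult.commute)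
  qed
  then have "A ** U = U ** diagm (\<lambda>i. complex_of_real (d i))"
    by (simp add: vec_eq_iff)
  then have "A = U ** diagm (\<lambda>i. complex_of_real (d i)) ** adj U"
    using U by (metis matrix_mul_assoc matrix_mul_rid unitary_right)
  with U show ?thesis
    using that by blast
qed

theorem posdef_spectral_decomp:
  fixes A :: "complex^'n^'n"
  assumes pd: "posdef A"
  obtains U d where "spectral_decomp A U d"
proof -
  obtain U and d :: "'n \<Rightarrow> real"
    where U: "unitary U" and A: "A = U ** diagm (\<lambda>i. complex_of_real (d i)) ** adj U"
    using hermitian_unitary_diagonalisation pd by (auto simp: posdef_def)
  have "0 < d c" for c
  proof -
    have U_axis: "adj U *v (U *v axis c 1) = axis c 1"
      using U by (simp add: matrix_vector_mul_assoc unitary_def)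
    then have "U *v axis c 1 \<noteq> 0"
      by (metis axis_eq_0_iff matrix_vector_mult_0_right zero_neq_one)
    moreover have "(\<Sum>i\<in>UNIV. d i * (cmod (axis c 1 $ i))\<^sup>2) = d c"
      by (subst sum.cong[OF refl, of _ _ "\<lambda>i. if i = c then d i else 0"]) (auto simp: axis_def)
    then have "quad A (U *v axis c 1) = d c"
      using U by (simp add: A U_axis qform_unitary_diagm Re_sum)
    ultimately show ?thesis
      using pd by (metis posdef_def)
  qed
  then show ?thesis
    using U A that by (auto simp: spectral_decomp_def)
qed

lemma posdef_hermitian: "posdef A \<Longrightarrow> hermitian A"
  by (simp add: posdef_def)

lemma posdef_quad_nonneg: "posdef A \<Longrightarrow> 0 \<le> quad A x"
  by (cases "x = 0") (auto simp: posdef_def qform_def intro: less_imp_le)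

lemma posdef_mat_1: "posdef (mat 1)"
  by (simp add: posdef_def hermitian_def qform_cinner cinner_self)

lemma posdef_mpow: "posdef A \<Longrightarrow> posdef (mpow A p)"
  by (metis posdef_spectral_decomp spectral_decomp_mpow spectral_decomp_posdef)

lemma hermitian_mpow: "posdef A \<Longrightarrow> hermitian (mpow A p)"
  by (simp add: posdef_hermitian posdef_mpow)

lemma mpow_0: "posdef A \<Longrightarrow> mpow A 0 = mat 1"
proof -
  assume "posdef A"
  then obtain U d where S: "spectral_decomp A U d"
    by (rule posdef_spectral_decomp)
  then have "unitary U" and "(\<lambda>i. complex_of_real (d i powr 0)) = (\<lambda>i. 1)"
    by (auto simp: spectral_decomp_def less_imp_neq[symmetric])
  then show ?thesis
    by (simp add: mpow_spectral_decomp[OF S] diagm_1 unitary_right)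
qed

lemma mpow_1: "posdef A \<Longrightarrow> mpow A 1 = A"
proof -
  assume "posdef A"
  then obtain U d where S: "spectral_decomp A U d"
    by (rule posdef_spectral_decomp)
  then have d: "\<forall>i. 0 < d i" and A: "A = U ** diagm (\<lambda>i. complex_of_real (d i)) ** adj U"
    by (auto simp: spectral_decomp_def)
  have "(\<lambda>i. complex_of_real (d i powr 1)) = (\<lambda>i. complex_of_real (d i))"
    using d by (simp add: less_imp_le)
  then show ?thesis
    by (simp only: mpow_spectral_decomp[OF S]) (simp add: A)
qed

lemma mpow_mpow: "posdef A \<Longrightarrow> mpow (mpow A a) b = mpow A (a * b)"
proof -
  assume "posdef A"
  then obtain U d where S: "spectral_decomp A U d"
    by (rule posdef_spectral_decomp)
  show ?thesis
    using mpow_spectral_decomp[OF spectral_decomp_mpow[OF S, of a], of b]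
      mpow_spectral_decomp[OF S, of "a * b"]
    by (simp add: powr_powr)
qed


section \<open>Monotone concave maps\<close>

lemma hermitian_convex_comb:
  "hermitian A \<Longrightarrow> hermitian B \<Longrightarrow> hermitian (t *\<^sub>R A + (1 - t) *\<^sub>R B)"
  by (simp add: hermitian_def adj_add adj_scaleR)

lemma posdef_convex_comb:
  assumes "posdef A" "posdef B" "0 \<le> t" "t \<le> 1"
  shows "posdef (t *\<^sub>R A + (1 - t) *\<^sub>R B)"
proof -
  have "0 < t * quad A x + (1 - t) * quad B x" if "x \<noteq> 0" for x
  proof -
    have "0 < quad A x" "0 < quad B x"
      using assms that by (auto simp: posdef_def)
    then show ?thesis
      using assms(3,4) by (cases "t = 0") (auto intro: add_pos_nonneg)
  qed
  then show ?thesis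
    using assms by (simp add: posdef_def hermitian_convex_comb qform_add qform_scaleR)
qed

lemma loewner_le_iff_quad:
  "hermitian Y \<Longrightarrow> hermitian X \<Longrightarrow> loewner_le Y X \<longleftrightarrow> (\<forall>z. quad Y z \<le> quad X z)"
  by (simp add: loewner_le_def psd_def hermitian_def adj_diff qform_diff)

lemma loewner_le_refl: "hermitian X \<Longrightarrow> loewner_le X X"
  by (simp add: loewner_le_iff_quad)

lemma loewner_le_convex_comb_iff:
  assumes "hermitian A" "hermitian B" "hermitian X"
  shows "loewner_le (t *\<^sub>R A + (1 - t) *\<^sub>R B) X \<longleftrightarrow>
    (\<forall>z. t * quad A z + (1 - t) * quad B z \<le> quad X z)"
  using assms by (simp add: loewner_le_iff_quad hermitian_convex_comb qform_add qform_scaleR)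

text \<open>Monotonicity and concavity in the Loewner order, combined into one condition on positive
  definite arguments: unlike concavity alone, it is preserved under composition.\<close>

definition mono_concave :: "(complex^'n^'n \<Rightarrow> complex^'m^'m) \<Rightarrow> bool" where
  "mono_concave f \<longleftrightarrow> (\<forall>A B X t. posdef A \<longrightarrow> posdef B \<longrightarrow> posdef X \<longrightarrow> 0 \<le> t \<longrightarrow> t \<le> 1 \<longrightarrow>
     loewner_le (t *\<^sub>R A + (1 - t) *\<^sub>R B) X \<longrightarrow> loewner_le (t *\<^sub>R f A + (1 - t) *\<^sub>R f B) (f X))"

lemma mono_concave_comp:
  assumes "mono_concave f" "mono_concave g" "\<And>A. posdef A \<Longrightarrow> posdef (f A)"
  shows "mono_concave (g \<circ> f)"
  using assms unfolding mono_concave_def comp_def by blast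

lemma mono_concave_quadI:
  assumes pos: "\<And>A. posdef A \<Longrightarrow> posdef (f A)"
    and quad_le: "\<And>A B X t x. posdef A \<Longrightarrow> posdef B \<Longrightarrow> posdef X \<Longrightarrow> 0 \<le> t \<Longrightarrow> t \<le> 1 \<Longrightarrow>
      \<forall>z. t * quad A z + (1 - t) * quad B z \<le> quad X z \<Longrightarrow>
      t * quad (f A) x + (1 - t) * quad (f B) x \<le> quad (f X) x"
  shows "mono_concave f"
  unfolding mono_concave_def
  by (simp add: loewner_le_convex_comb_iff posdef_hermitian pos quad_le)

lemma mono_concave_quadD:
  assumes "mono_concave f" "\<And>A. posdef A \<Longrightarrow> posdef (f A)"
    and "posdef A" "posdef B" "posdef X" "0 \<le> t" "t \<le> 1"
    and "\<forall>z. t * quad A z + (1 - t) * quad B z \<le> quad X z"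
  shows "t * quad (f A) x + (1 - t) * quad (f B) x \<le> quad (f X) x"
  using assms unfolding mono_concave_def by (simp add: loewner_le_convex_comb_iff posdef_hermitian)


section \<open>The variational formula for the inverse\<close>

lemma cnj_mult_le:
  fixes a b :: complex and d :: real
  assumes "d > 0"
  shows "2 * Re (cnj a * b) - d * (cmod a)\<^sup>2 \<le> (cmod b)\<^sup>2 / d"
proof -
  have "0 \<le> (d * Re a - Re b)\<^sup>2 + (d * Im a - Im b)\<^sup>2"
    by simp
  then have "d * (2 * (Re a * Re b + Im a * Im b) - d * ((Re a)\<^sup>2 + (Im a)\<^sup>2)) \<le> (Re b)\<^sup>2 + (Im b)\<^sup>2"
    by (simp add: power2_eq_square algebra_simps)
  then show ?thesis
    using assms by (simp add: cmod_power2 field_simps)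
qed

lemma quad_mpow_minus_1_ge:
  assumes "posdef X"
  shows "2 * Re (cinner z v) - quad X z \<le> quad (mpow X (-1)) v"
proof -
  obtain U d where S: "spectral_decomp X U d"
    using posdef_spectral_decomp[OF assms] .
  have U: "unitary U" and d: "\<forall>i. 0 < d i"
    using S by (auto simp: spectral_decomp_def)
  let ?y = "adj U *v z" and ?u = "adj U *v v"
  have "cinner z v = cinner ?y ?u"
    using U by (simp add: cinner_adj_left matrix_vector_mul_assoc unitary_right)
  then have "2 * Re (cinner z v) - quad X z
      = (\<Sum>i\<in>UNIV. 2 * Re (cnj (?y $ i) * ?u $ i) - d i * (cmod (?y $ i))\<^sup>2)"
    by (simp add: cinner_def quad_spectral_decomp[OF S] Re_sum sum_subtractf sum_distrib_left)
  also have "\<dots> \<le> (\<Sum>i\<in>UNIV. d i powr -1 * (cmod (?u $ i))\<^sup>2)"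
  proof (rule sum_mono)
    fix i
    have "0 < d i"
      using d by simp
    then show "2 * Re (cnj (?y $ i) * ?u $ i) - d i * (cmod (?y $ i))\<^sup>2 \<le> d i powr -1 * (cmod (?u $ i))\<^sup>2"
      using cnj_mult_le[of "d i" "?y $ i" "?u $ i"]
      by (simp add: powr_minus divide_inverse mult.commute abs_of_pos)
  qed
  also have "\<dots> = quad (mpow X (-1)) v"
    using quad_spectral_decomp[OF spectral_decomp_mpow[OF S, of "-1"]] by simp
  finally show ?thesis .
qed

lemma quad_mpow_minus_1_eq:
  assumes "posdef X"
  shows "2 * Re (cinner (mpow X (-1) *v v) v) - quad X (mpow X (-1) *v v) = quad (mpow X (-1)) v"
proof -
  obtain U d where S: "spectral_decomp X U d"
    using posdef_spectral_decomp[OF assms] .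
  let ?Y = "mpow X (-1)"
  have "qform X (?Y *v v) = cinner (?Y *v v) v"
    by (simp add: qform_cinner matrix_vector_mul_assoc mpow_minus_1_right_inverse[OF S])
  moreover have "cinner (?Y *v v) v = qform ?Y v"
    using hermitian_mpow[OF assms] by (simp add: qform_cinner cinner_adj_left hermitian_def)
  ultimately show ?thesis
    by simp
qed

text \<open>Joint convexity of (X, v) \<mapsto> v* X^-1 v: evaluate the variational formula for the
  combined point at its maximiser z = X^-1 v and bound the two resulting terms separately.\<close>

lemma quad_mpow_minus_1_jointly_convex:
  assumes "posdef A" "posdef B" "posdef X" "0 \<le> t" "t \<le> 1"
    and le: "\<forall>z. t * quad A z + (1 - t) * quad B z \<le> quad X z"
  shows "quad (mpow X (-1)) (t *\<^sub>R a + (1 - t) *\<^sub>R b)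
    \<le> t * quad (mpow A (-1)) a + (1 - t) * quad (mpow B (-1)) b"
proof -
  define v where "v = t *\<^sub>R a + (1 - t) *\<^sub>R b"
  define z where "z = mpow X (-1) *v v"
  have "quad (mpow X (-1)) v = 2 * Re (cinner z v) - quad X z"
    using quad_mpow_minus_1_eq[OF assms(3), of v] by (simp add: z_def)
  also have "\<dots> \<le> 2 * Re (cinner z v) - (t * quad A z + (1 - t) * quad B z)"
    using le[rule_format, of z] by simp
  also have "\<dots> = t * (2 * Re (cinner z a) - quad A z) + (1 - t) * (2 * Re (cinner z b) - quad B z)"
    unfolding v_def cinner_add_right cinner_scaleR_right by (simp add: algebra_simps)
  also have "\<dots> \<le> t * quad (mpow A (-1)) a + (1 - t) * quad (mpow B (-1)) b"
    using assms quad_mpow_minus_1_ge by (intro add_mono mult_left_mono) auto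
  finally show ?thesis
    by (simp add: v_def)
qed


section \<open>The map X \<mapsto> (K + H* X^-1 H)^-1\<close>

definition Phi :: "complex^'n^'n \<Rightarrow> complex^'n^'m \<Rightarrow> complex^'m^'m \<Rightarrow> complex^'n^'n" where
  "Phi K H X = mpow (K + adj H ** mpow X (-1) ** H) (-1)"

lemma posdef_add_congruence:
  assumes K: "posdef K" and Y: "posdef Y"
  shows "posdef (K + adj H ** Y ** H)"
proof -
  have "hermitian (K + adj H ** Y ** H)"
    using K Y by (simp add: posdef_def hermitian_def adj_add adj_mult matrix_mul_assoc)
  moreover have "0 < quad (K + adj H ** Y ** H) y" if "y \<noteq> 0" for y
    using K that posdef_quad_nonneg[OF Y, of "H *v y"]
    by (simp add: posdef_def qform_add qform_congruence add_pos_nonneg)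
  ultimately show ?thesis
    by (simp add: posdef_def)
qed

lemma posdef_Phi: "posdef K \<Longrightarrow> posdef X \<Longrightarrow> posdef (Phi K H X)"
  unfolding Phi_def by (intro posdef_mpow posdef_add_congruence)

lemma quad_Phi_ge:
  assumes "posdef K" "posdef X"
  shows "2 * Re (cinner y x) - quad K y - quad (mpow X (-1)) (H *v y) \<le> quad (Phi K H X) x"
  using quad_mpow_minus_1_ge[OF posdef_add_congruence[OF assms(1) posdef_mpow[OF assms(2), of "-1"], of H],
      of y x]
  by (simp add: Phi_def qform_add qform_congruence)

lemma quad_Phi_eq:
  assumes "posdef K" "posdef X"
  shows "quad (Phi K H X) x = 2 * Re (cinner (Phi K H X *v x) x) - quad K (Phi K H X *v x)
    - quad (mpow X (-1)) (H *v (Phi K H X *v x))"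
  using quad_mpow_minus_1_eq[OF posdef_add_congruence[OF assms(1) posdef_mpow[OF assms(2), of "-1"], of H],
      of x]
  by (simp add: Phi_def qform_add qform_congruence)

text \<open>Both sides are evaluated through the variational formula: the optimal vectors for A and B
  average to an admissible vector for X, and the K- and X^-1-terms are convex in it.\<close>

lemma mono_concave_Phi:
  fixes K :: "complex^'n^'n" and H :: "complex^'n^'m"
  assumes K: "posdef K"
  shows "mono_concave (Phi K H)"
proof (rule mono_concave_quadI)
  show "posdef (Phi K H A)" if "posdef A" for A
    using posdef_Phi[OF K that] .
next
  fix A B X :: "complex^'m^'m" and t :: real and x :: "complex^'n"
  assume A: "posdef A" and B: "posdef B" and X: "posdef X" and t: "0 \<le> t" "t \<le> 1"
    and le: "\<forall>z. t * quad A z + (1 - t) * quad B z \<le> quad X z"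
  define yA where "yA = Phi K H A *v x"
  define yB where "yB = Phi K H B *v x"
  define y where "y = t *\<^sub>R yA + (1 - t) *\<^sub>R yB"
  have "Re (cinner y x) = t * Re (cinner yA x) + (1 - t) * Re (cinner yB x)"
    unfolding y_def cinner_add_left cinner_scaleR_left by simp
  moreover have "quad K y \<le> t * quad K yA + (1 - t) * quad K yB"
    unfolding y_def using quad_convex posdef_quad_nonneg[OF K] t by blast
  moreover have "quad (mpow X (-1)) (H *v y)
      \<le> t * quad (mpow A (-1)) (H *v yA) + (1 - t) * quad (mpow B (-1)) (H *v yB)"
    using quad_mpow_minus_1_jointly_convex[OF A B X t le]
    by (simp add: y_def matrix_vector_right_distrib matrix_vector_mult_scaleR_complex)
  moreover have "2 * Re (cinner y x) - quad K y - quad (mpow X (-1)) (H *v y) \<le> quad (Phi K H X) x"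
    by (rule quad_Phi_ge[OF K X])
  ultimately show "t * quad (Phi K H A) x + (1 - t) * quad (Phi K H B) x \<le> quad (Phi K H X) x"
    unfolding quad_Phi_eq[OF K A, where H = H and x = x] quad_Phi_eq[OF K B, where H = H and x = x]
      yA_def[symmetric] yB_def[symmetric]
    by (simp add: algebra_simps)
qed

lemma psi_eq_Phi:
  assumes "posdef K" "posdef A"
  shows "psi K H p s A = mpow (Phi K H (mpow A (-p))) (-s)"
proof -
  have "mpow (mpow A (-p)) (-1) = mpow A p"
    using mpow_mpow[OF assms(2)] by simp
  moreover have "posdef (K + adj H ** mpow A p ** H)"
    using assms by (intro posdef_add_congruence posdef_mpow)
  ultimately show ?thesis
    by (simp add: psi_def Phi_def mpow_mpow)
qed


section \<open>An integral representation of fractional powers\<close>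

text \<open>The kernel integrates to \<pi> / sin (\<pi> r); only finiteness and positivity are needed.\<close>

definition pow_kernel :: "real \<Rightarrow> real \<Rightarrow> real" where
  "pow_kernel r l = indicator {0<..} l * l powr (r - 1) / (1 + l)"

lemma pow_kernel_integral_finite:
  assumes r: "0 < r" "r < 1"
  shows "(\<integral>\<^sup>+ l. ennreal (pow_kernel r l) \<partial>lborel) < \<infinity>"
proof -
  let ?f = "\<lambda>l. ennreal (indicator {0..1} l * l powr (r - 1))"
  let ?g = "\<lambda>l. ennreal (indicator {1..} l * l powr (r - 2))"
  have f: "(\<integral>\<^sup>+ l. ?f l \<partial>lborel) = ennreal (1 / r)"
    using has_integral_powr_from_0[of "r - 1" 1] r
    by (intro nn_integral_has_integral_lebesgue) auto
  have g: "(\<integral>\<^sup>+ l. ?g l \<partial>lborel) = ennreal (1 / (1 - r))"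
    using has_integral_powr_to_inf[of "r - 2" 1] r
    by (intro nn_integral_has_integral_lebesgue) (auto simp: minus_divide_right)
  have "pow_kernel r l \<le> indicator {0..1} l * l powr (r - 1) + indicator {1..} l * l powr (r - 2)" for l
  proof (cases "0 < l")
    case l: True
    show ?thesis
    proof (cases "l \<le> 1")
      case True
      have "l powr (r - 1) / (1 + l) \<le> l powr (r - 1)"
        using l by (simp add: divide_le_eq)
      then show ?thesis
        using l True by (simp add: pow_kernel_def indicator_def)
    next
      case False
      have "l powr (r - 1) / (1 + l) \<le> l powr (r - 1) / l"
        using l by (intro divide_left_mono) auto
      also have "\<dots> = l powr (r - 2)"
        using l by (simp add: powr_diff[of l "r - 1" 1, simplified])
      finally show ?thesis
        using l False by (simp add: pow_kernel_def indicator_def)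
    qed
  qed (simp add: pow_kernel_def indicator_def)
  then have "(\<integral>\<^sup>+ l. ennreal (pow_kernel r l) \<partial>lborel) \<le> (\<integral>\<^sup>+ l. ?f l + ?g l \<partial>lborel)"
    by (intro nn_integral_mono) (simp flip: ennreal_plus)
  also have "\<dots> = (\<integral>\<^sup>+ l. ?f l \<partial>lborel) + (\<integral>\<^sup>+ l. ?g l \<partial>lborel)"
    by (rule nn_integral_add) measurable
  also have "\<dots> < \<infinity>"
    unfolding f g by simp
  finally show ?thesis .
qed

lemma pow_kernel_integral_pos:
  assumes r: "0 < r" "r < 1"
  shows "0 < (\<integral>\<^sup>+ l. ennreal (pow_kernel r l) \<partial>lborel)"
proof -
  have "ennreal (1 / 6) * indicator {1..2} l \<le> ennreal (pow_kernel r l)" for l :: real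
  proof (cases "l \<in> {1..2}")
    case True
    then have "1 / 2 \<le> l powr -1"
      by (simp add: powr_minus field_simps)
    also have "\<dots> \<le> l powr (r - 1)"
      using True r by (intro powr_mono) auto
    finally have "1 / 6 \<le> l powr (r - 1) * (1 / (1 + l))"
      using True mult_mono[of "1 / 2" "l powr (r - 1)" "1 / 3" "1 / (1 + l)"] by (simp add: field_simps)
    then show ?thesis
      using True by (simp add: pow_kernel_def indicator_def ennreal_leI)
  qed simp
  then have "(\<integral>\<^sup>+ l. ennreal (1 / 6) * indicator {1..2::real} l \<partial>lborel)
      \<le> (\<integral>\<^sup>+ l. ennreal (pow_kernel r l) \<partial>lborel)"
    by (intro nn_integral_mono)
  moreover have "(\<integral>\<^sup>+ l. ennreal (1 / 6) * indicator {1..2::real} l \<partial>lborel) = ennreal (1 / 6)"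
    by (simp add: nn_integral_cmult_indicator)
  ultimately show ?thesis
    by (metis ennreal_less_zero_iff order_less_le_trans zero_less_divide_1_iff zero_less_numeral)
qed

lemma nn_integral_powr_resolvent:
  assumes d: "0 < d"
  shows "(\<integral>\<^sup>+ l. ennreal (indicator {0<..} l * l powr (r - 1) * (d / (l + d))) \<partial>lborel)
    = ennreal (d powr r) * (\<integral>\<^sup>+ l. ennreal (pow_kernel r l) \<partial>lborel)"
proof -
  let ?f = "\<lambda>l::real. ennreal (indicator {0<..} l * l powr (r - 1) * (d / (l + d)))"
  have "?f (d * x) = ennreal (d powr (r - 1)) * ennreal (pow_kernel r x)" for x
  proof (cases "0 < x")
    case True
    have "d * x + d = d * (1 + x)"
      by (simp add: algebra_simps)
    then have "indicator {0<..} (d * x) * (d * x) powr (r - 1) * (d / (d * x + d))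
        = d powr (r - 1) * pow_kernel r x"
      using d True by (simp add: pow_kernel_def indicator_def powr_mult)
    then show ?thesis
      using d by (simp add: ennreal_mult'[symmetric] del: ennreal_mult')
  next
    case False
    then show ?thesis
      using d by (simp add: pow_kernel_def indicator_def zero_less_mult_iff)
  qed
  then have "(\<integral>\<^sup>+ l. ?f l \<partial>lborel)
      = ennreal d * (\<integral>\<^sup>+ x. ennreal (d powr (r - 1)) * ennreal (pow_kernel r x) \<partial>lborel)"
    using nn_integral_real_affine[of ?f d 0] d by simp
  also have "\<dots> = ennreal d * ennreal (d powr (r - 1)) * (\<integral>\<^sup>+ x. ennreal (pow_kernel r x) \<partial>lborel)"
    by (subst nn_integral_cmult) (auto simp: pow_kernel_def mult.assoc)
  also have "ennreal d * ennreal (d powr (r - 1)) = ennreal (d powr r)"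
    using d by (simp add: powr_diff flip: ennreal_mult)
  finally show ?thesis .
qed

lemma ennreal_convex_comb:
  assumes "0 \<le> t" "t \<le> 1" "0 \<le> a" "0 \<le> b"
  shows "ennreal (t * a + (1 - t) * b) = ennreal t * ennreal a + ennreal (1 - t) * ennreal b"
  using assms by (subst ennreal_plus) (simp_all add: ennreal_mult)

text \<open>With K = 1 and H = sqrt l, Phi is the resolvent-type map X \<mapsto> X (l + X)^-1.\<close>

lemma quad_Phi_resolvent:
  assumes S: "spectral_decomp X U d" and l: "0 < l"
  shows "quad (Phi (mat 1) (sqrt l *\<^sub>R mat 1) X) x
    = (\<Sum>i\<in>UNIV. (cmod ((adj U *v x) $ i))\<^sup>2 * (d i / (l + d i)))"
proof -
  have U: "unitary U" and d: "\<forall>i. 0 < d i"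
    using S by (auto simp: spectral_decomp_def)
  have "mat 1 + adj (sqrt l *\<^sub>R mat 1) ** mpow X (-1) ** (sqrt l *\<^sub>R mat 1) = mat 1 + l *\<^sub>R mpow X (-1)"
    using l by (simp add: adj_scaleR matrix_scalar_ac flip: scalar_matrix_assoc)
  also have "\<dots> = U ** (diagm (\<lambda>i. 1) + l *\<^sub>R diagm (\<lambda>i. complex_of_real (d i powr -1))) ** adj U"
    by (simp add: mpow_spectral_decomp[OF S] diagm_1 unitary_right[OF U] matrix_add_ldistrib
        matrix_add_rdistrib matrix_scalar_ac scalar_matrix_assoc)
  also have "\<dots> = U ** diagm (\<lambda>i. complex_of_real (1 + l / d i)) ** adj U"
    using d by (simp add: scaleR_diagm diagm_add powr_minus divide_inverse abs_of_pos)
  finally have "spectral_decomp (mat 1 + adj (sqrt l *\<^sub>R mat 1) ** mpow X (-1) ** (sqrt l *\<^sub>R mat 1))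
      U (\<lambda>i. 1 + l / d i)"
    using U d l by (simp add: spectral_decomp_def add_pos_pos)
  then have "quad (Phi (mat 1) (sqrt l *\<^sub>R mat 1) X) x
      = (\<Sum>i\<in>UNIV. (1 + l / d i) powr -1 * (cmod ((adj U *v x) $ i))\<^sup>2)"
    unfolding Phi_def by (rule quad_spectral_decomp[OF spectral_decomp_mpow])
  also have "\<dots> = (\<Sum>i\<in>UNIV. (cmod ((adj U *v x) $ i))\<^sup>2 * (d i / (l + d i)))"
  proof (rule sum.cong[OF refl])
    fix i
    have "(1 + l / d i) powr -1 = d i / (l + d i)"
      using d[rule_format, of i] l by (simp add: powr_minus add_pos_pos field_simps)
    then show "(1 + l / d i) powr -1 * (cmod ((adj U *v x) $ i))\<^sup>2
        = (cmod ((adj U *v x) $ i))\<^sup>2 * (d i / (l + d i))"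
      by simp
  qed
  finally show ?thesis .
qed

definition powr_integrand :: "real \<Rightarrow> complex^'n^'n \<Rightarrow> complex^'n \<Rightarrow> real \<Rightarrow> real" where
  "powr_integrand r X x l = indicator {0<..} l * l powr (r - 1) * quad (Phi (mat 1) (sqrt l *\<^sub>R mat 1) X) x"

lemma powr_integrand_spectral_decomp:
  assumes "spectral_decomp X U d"
  shows "powr_integrand r X x l
    = (\<Sum>i\<in>UNIV. (cmod ((adj U *v x) $ i))\<^sup>2 * (indicator {0<..} l * l powr (r - 1) * (d i / (l + d i))))"
  by (cases "0 < l")
    (simp_all add: powr_integrand_def quad_Phi_resolvent[OF assms] sum_distrib_left mult_ac)

lemma powr_integrand_nonneg: "posdef X \<Longrightarrow> 0 \<le> powr_integrand r X x l"
  unfolding powr_integrand_def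
  by (cases "0 < l") (simp_all add: posdef_quad_nonneg posdef_Phi[OF posdef_mat_1])

lemma powr_integrand_measurable [measurable]:
  assumes "posdef X"
  shows "(\<lambda>l. ennreal (powr_integrand r X x l)) \<in> borel_measurable borel"
proof -
  obtain U d where "spectral_decomp X U d"
    using posdef_spectral_decomp[OF assms] .
  then show ?thesis
    by (simp add: powr_integrand_spectral_decomp)
qed

lemma nn_integral_powr_integrand:
  assumes "posdef X"
  shows "(\<integral>\<^sup>+ l. ennreal (powr_integrand r X x l) \<partial>lborel)
    = ennreal (quad (mpow X r) x) * (\<integral>\<^sup>+ l. ennreal (pow_kernel r l) \<partial>lborel)"
proof -
  obtain U d where S: "spectral_decomp X U d"
    using posdef_spectral_decomp[OF assms] .
  have d: "\<forall>i. 0 < d i"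
    using S by (auto simp: spectral_decomp_def)
  let ?w = "\<lambda>i. (cmod ((adj U *v x) $ i))\<^sup>2"
  let ?g = "\<lambda>i l. indicator {0<..} l * l powr (r - 1) * (d i / (l + d i))"
  have g_nonneg: "0 \<le> ?g i l" for i l
    using d[rule_format, of i] by (cases "0 < l") auto
  have "ennreal (powr_integrand r X x l) = (\<Sum>i\<in>UNIV. ennreal (?w i) * ennreal (?g i l))" for l
  proof -
    have "ennreal (powr_integrand r X x l) = (\<Sum>i\<in>UNIV. ennreal (?w i * ?g i l))"
      unfolding powr_integrand_spectral_decomp[OF S]
      by (rule sum_ennreal[symmetric]) (intro mult_nonneg_nonneg zero_le_power2 g_nonneg)
    also have "\<dots> = (\<Sum>i\<in>UNIV. ennreal (?w i) * ennreal (?g i l))"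
      by (intro sum.cong refl ennreal_mult zero_le_power2 g_nonneg)
    finally show ?thesis .
  qed
  then have "(\<integral>\<^sup>+ l. ennreal (powr_integrand r X x l) \<partial>lborel)
      = (\<integral>\<^sup>+ l. (\<Sum>i\<in>UNIV. ennreal (?w i) * ennreal (?g i l)) \<partial>lborel)"
    by simp
  also have "\<dots> = (\<Sum>i\<in>UNIV. ennreal (?w i) * (\<integral>\<^sup>+ l. ennreal (?g i l) \<partial>lborel))"
    by (subst nn_integral_sum) (auto intro!: sum.cong nn_integral_cmult)
  also have "\<dots> = (\<Sum>i\<in>UNIV. ennreal (?w i)
      * (ennreal (d i powr r) * (\<integral>\<^sup>+ l. ennreal (pow_kernel r l) \<partial>lborel)))"
    using d by (simp only: nn_integral_powr_resolvent)
  also have "\<dots> = (\<Sum>i\<in>UNIV. ennreal (d i powr r * ?w i)) * (\<integral>\<^sup>+ l. ennreal (pow_kernel r l) \<partial>lborel)"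
    by (simp add: sum_distrib_left sum_distrib_right ennreal_mult mult_ac)
  also have "\<dots> = ennreal (quad (mpow X r) x) * (\<integral>\<^sup>+ l. ennreal (pow_kernel r l) \<partial>lborel)"
    using quad_spectral_decomp[OF spectral_decomp_mpow[OF S, of r]] by (simp flip: sum_ennreal)
  finally show ?thesis .
qed

lemma powr_integrand_mono_concave:
  assumes A: "posdef A" and B: "posdef B" and X: "posdef X" and t: "0 \<le> t" "t \<le> 1"
    and le: "\<forall>z. t * quad A z + (1 - t) * quad B z \<le> quad X z"
  shows "t * powr_integrand r A x l + (1 - t) * powr_integrand r B x l \<le> powr_integrand r X x l"
proof (cases "0 < l")
  case True
  let ?G = "Phi (mat 1) (sqrt l *\<^sub>R mat 1)"
  have "t * quad (?G A) x + (1 - t) * quad (?G B) x \<le> quad (?G X) x"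
    using mono_concave_quadD[OF mono_concave_Phi[OF posdef_mat_1] posdef_Phi[OF posdef_mat_1] A B X t le]
    by blast
  then have "l powr (r - 1) * (t * quad (?G A) x + (1 - t) * quad (?G B) x) \<le> l powr (r - 1) * quad (?G X) x"
    by (rule mult_left_mono) simp
  then show ?thesis
    using True by (simp add: powr_integrand_def algebra_simps)
qed (simp add: powr_integrand_def)

lemma nn_integral_powr_integrand_convex_comb:
  assumes A: "posdef A" and B: "posdef B" and t: "0 \<le> t" "t \<le> 1"
  shows "(\<integral>\<^sup>+ l. ennreal (t * powr_integrand r A x l + (1 - t) * powr_integrand r B x l) \<partial>lborel)
    = ennreal t * (\<integral>\<^sup>+ l. ennreal (powr_integrand r A x l) \<partial>lborel)
      + ennreal (1 - t) * (\<integral>\<^sup>+ l. ennreal (powr_integrand r B x l) \<partial>lborel)"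
proof -
  have "(\<integral>\<^sup>+ l. ennreal (t * powr_integrand r A x l + (1 - t) * powr_integrand r B x l) \<partial>lborel)
      = (\<integral>\<^sup>+ l. ennreal t * ennreal (powr_integrand r A x l)
          + ennreal (1 - t) * ennreal (powr_integrand r B x l) \<partial>lborel)"
    using powr_integrand_nonneg[OF A] powr_integrand_nonneg[OF B]
    by (simp add: ennreal_convex_comb[OF t])
  also have "\<dots> = ennreal t * (\<integral>\<^sup>+ l. ennreal (powr_integrand r A x l) \<partial>lborel)
      + ennreal (1 - t) * (\<integral>\<^sup>+ l. ennreal (powr_integrand r B x l) \<partial>lborel)"
    by (subst nn_integral_add)
      (auto intro!: borel_measurable_times_ennreal powr_integrand_measurable A B
        simp: nn_integral_cmult powr_integrand_measurable[OF A] powr_integrand_measurable[OF B])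
  finally show ?thesis .
qed

text \<open>For 0 < r < 1, X^r is c^-1 times the integral over l > 0 of l^(r - 1) X (l + X)^-1,
  an average of instances of Phi with K = 1 and H = sqrt l.\<close>

lemma quad_mpow_fractional_mono_concave:
  assumes r: "0 < r" "r < 1"
    and A: "posdef A" and B: "posdef B" and X: "posdef X" and t: "0 \<le> t" "t \<le> 1"
    and le: "\<forall>z. t * quad A z + (1 - t) * quad B z \<le> quad X z"
  shows "t * quad (mpow A r) x + (1 - t) * quad (mpow B r) x \<le> quad (mpow X r) x"
proof -
  obtain c where c: "(\<integral>\<^sup>+ l. ennreal (pow_kernel r l) \<partial>lborel) = ennreal c" "0 \<le> c"
    using pow_kernel_integral_finite[OF r] by (cases "\<integral>\<^sup>+ l. ennreal (pow_kernel r l) \<partial>lborel") auto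
  then have "0 < c"
    using pow_kernel_integral_pos[OF r] by simp
  have integral: "(\<integral>\<^sup>+ l. ennreal (powr_integrand r Y x l) \<partial>lborel) = ennreal (c * quad (mpow Y r) x)"
    if "posdef Y" for Y
    using nn_integral_powr_integrand[OF that] c posdef_quad_nonneg[OF posdef_mpow[OF that]]
    by (simp add: ennreal_mult mult.commute)
  have "ennreal (c * (t * quad (mpow A r) x + (1 - t) * quad (mpow B r) x))
      = ennreal (t * (c * quad (mpow A r) x) + (1 - t) * (c * quad (mpow B r) x))"
    by (simp add: algebra_simps)
  also have "\<dots> = ennreal t * (\<integral>\<^sup>+ l. ennreal (powr_integrand r A x l) \<partial>lborel)
      + ennreal (1 - t) * (\<integral>\<^sup>+ l. ennreal (powr_integrand r B x l) \<partial>lborel)"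
    using c posdef_quad_nonneg[OF posdef_mpow[OF A]] posdef_quad_nonneg[OF posdef_mpow[OF B]]
    by (simp add: ennreal_convex_comb[OF t] integral A B)
  also have "\<dots> = (\<integral>\<^sup>+ l. ennreal (t * powr_integrand r A x l + (1 - t) * powr_integrand r B x l) \<partial>lborel)"
    by (rule nn_integral_powr_integrand_convex_comb[OF A B t, symmetric])
  also have "\<dots> \<le> (\<integral>\<^sup>+ l. ennreal (powr_integrand r X x l) \<partial>lborel)"
    by (intro nn_integral_mono ennreal_leI powr_integrand_mono_concave[OF A B X t le])
  also have "\<dots> = ennreal (c * quad (mpow X r) x)"
    by (rule integral[OF X])
  finally show ?thesis
    using \<open>0 < c\<close> posdef_quad_nonneg[OF posdef_mpow[OF X]] by (simp add: ennreal_le_iff)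
qed

lemma mono_concave_mpow:
  assumes r: "0 \<le> r" "r \<le> 1"
  shows "mono_concave (\<lambda>A. mpow A r)"
proof (rule mono_concave_quadI)
  show "posdef (mpow A r)" if "posdef A" for A
    using posdef_mpow[OF that] .
next
  fix A B X :: "complex^'n^'n" and t :: real and x :: "complex^'n"
  assume A: "posdef A" and B: "posdef B" and X: "posdef X" and t: "0 \<le> t" "t \<le> 1"
    and le: "\<forall>z. t * quad A z + (1 - t) * quad B z \<le> quad X z"
  consider "r = 0" | "r = 1" | "0 < r" "r < 1"
    using r by linarith
  then show "t * quad (mpow A r) x + (1 - t) * quad (mpow B r) x \<le> quad (mpow X r) x"
  proof cases
    case 1
    then show ?thesis
      by (simp add: mpow_0 A B X algebra_simps)
  next
    case 2
    then show ?thesis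
      using le by (simp add: mpow_1 A B X)
  next
    case 3
    then show ?thesis
      using quad_mpow_fractional_mono_concave[OF _ _ A B X t le] by blast
  qed
qed

theorem proposition3p3:
  fixes K H :: "complex^'n^'n" and p s :: real
  assumes "posdef K"
    and "-1 \<le> p" and "p \<le> 0" and "-1 \<le> s" and "s \<le> 0"
  shows "\<forall>A B t. posdef A \<longrightarrow> posdef B \<longrightarrow> 0 \<le> t \<longrightarrow> t \<le> 1 \<longrightarrow>
           loewner_le (t *\<^sub>R psi K H p s A + (1 - t) *\<^sub>R psi K H p s B)
                      (psi K H p s (t *\<^sub>R A + (1 - t) *\<^sub>R B))"
proof (intro allI impI)
  fix A B :: "complex^'n^'n" and t :: real
  assume A: "posdef A" and B: "posdef B" and t: "0 \<le> t" "t \<le> 1"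
  let ?f = "(\<lambda>Y. mpow Y (-s)) \<circ> Phi K H \<circ> (\<lambda>A. mpow A (-p))"
  have "mono_concave ?f"
    using assms
    by (intro mono_concave_comp mono_concave_mpow mono_concave_Phi posdef_mpow posdef_Phi) auto
  moreover have X: "posdef (t *\<^sub>R A + (1 - t) *\<^sub>R B)"
    using A B t by (rule posdef_convex_comb)
  ultimately have "loewner_le (t *\<^sub>R ?f A + (1 - t) *\<^sub>R ?f B) (?f (t *\<^sub>R A + (1 - t) *\<^sub>R B))"
    using A B t loewner_le_refl[OF posdef_hermitian[OF X]] unfolding mono_concave_def by blast
  then show "loewner_le (t *\<^sub>R psi K H p s A + (1 - t) *\<^sub>R psi K H p s B)
      (psi K H p s (t *\<^sub>R A + (1 - t) *\<^sub>R B))"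
    by (simp add: psi_eq_Phi assms(1) A B X)
qed

end
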